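(* We have \[ (n-1)P_{n-1}(y)=P'_{n-1}(y)-P'_n(y)\quad(n\ge1),\qquad (n-1)Q_{n-1}(y)=Q'_{n-1}(y)-Q'_n(y)\quad(n\ge2). \]
   Context: Let $A$ be the ring of formal series $\sum_{n\ge0}q_n(y)x^{-n}$, each $q_n$ a complex polynomial of degree at most $n$, with termwise formal derivatives $a_x=-\sum_{n\ge1}nq_n(y)x^{-n-1}$, $a_y=\sum_{n\ge1}q_n'(y)x^{-n}$, and $\log(1+u)=\sum_{k\ge1}(-1)^{k+1}u^k/k$ for $u$ with zero constant term. Let $V\in A$ be the unique solution of $V=1+\frac{y}{x}-\frac{1}{x}V-V_x-\frac{1}{x}V_y+\frac{1}{x}\log V$, and define polynomials $P_{n-1}$ ($n\ge1$) and $Q_n$ ($n\ge1$) by $V=1+\sum_{n\ge1}P_{n-1}(y)x^{-n}$ and $\log V=\sum_{n\ge1}Q_n(y)x^{-n}$ (so $P_0=y-1$). Primes denote derivatives in $y$. *)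

theory Defs
  imports "HOL-Computational_Algebra.Polynomial"
begin

text \<open>A formal series  sum_{n>=0} q_n(y) x^{-n}  is represented by its coefficient
  sequence  n \<mapsto> q_n  (a complex polynomial in y).\<close>

type_synonym ser = "nat \<Rightarrow> complex poly"

definition serA :: "ser set" where
  "serA = {s. \<forall>n. degree (s n) \<le> n}"

definition ser_one :: ser where "ser_one = (\<lambda>n. if n = 0 then 1 else 0)"

definition ser_add :: "ser \<Rightarrow> ser \<Rightarrow> ser" where "ser_add s t = (\<lambda>n. s n + t n)"
definition ser_sub :: "ser \<Rightarrow> ser \<Rightarrow> ser" where "ser_sub s t = (\<lambda>n. s n - t n)"

definition ser_mult :: "ser \<Rightarrow> ser \<Rightarrow> ser" where
  "ser_mult s t = (\<lambda>n. \<Sum>k\<le>n. s k * t (n - k))"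

fun ser_pow :: "ser \<Rightarrow> nat \<Rightarrow> ser" where
  "ser_pow s 0 = ser_one"
| "ser_pow s (Suc k) = ser_mult s (ser_pow s k)"

definition ser_xinv :: "ser \<Rightarrow> ser" where
  "ser_xinv s = (\<lambda>n. if n = 0 then 0 else s (n - 1))"

text \<open>Termwise derivative in x:  a_x = - sum_{n>=1} n q_n x^{-n-1}.\<close>
definition ser_dx :: "ser \<Rightarrow> ser" where
  "ser_dx s = (\<lambda>n. if n = 0 then 0 else - smult (of_nat (n - 1)) (s (n - 1)))"

definition ser_dy :: "ser \<Rightarrow> ser" where
  "ser_dy s = (\<lambda>n. pderiv (s n))"

text \<open>log(1+u) = sum_{k>=1} (-1)^{k+1} u^k / k for u with zero constant term; the
  coefficient of x^{-n} only receives contributions from k <= n.\<close>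
definition ser_log1p :: "ser \<Rightarrow> ser" where
  "ser_log1p u = (\<lambda>n. \<Sum>k\<in>{1..n}. smult ((-1) ^ (k + 1) / of_nat k) (ser_pow u k n))"

definition ser_log :: "ser \<Rightarrow> ser" where
  "ser_log v = ser_log1p (ser_sub v ser_one)"

definition ser_y_over_x :: ser where
  "ser_y_over_x = (\<lambda>n. if n = 1 then [:0, 1:] else 0)"

definition V_eqn :: "ser \<Rightarrow> bool" where
  "V_eqn V \<longleftrightarrow>
     V = ser_add (ser_sub (ser_sub (ser_sub (ser_add ser_one ser_y_over_x) (ser_xinv V))
                     (ser_dx V)) (ser_xinv (ser_dy V))) (ser_xinv (ser_log V))"

end

theory Submission
  imports Defs "HOL-Computational_Algebra.Formal_Power_Series"
begin

text \<open>Regard V and L = log V as power series v, L in X = 1/x over \<open>\<complex>[y]\<close>, write \<open>\<partial>\<^sub>X\<close> for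
  d/dX and \<open>\<partial>\<^sub>y\<close> for the coefficientwise y-derivative. The coefficient of \<open>X\<^sup>n\<^sup>+\<^sup>1\<close> in
  \<open>W = X\<^sup>2 \<partial>\<^sub>X v - X v - X \<partial>\<^sub>y v + \<partial>\<^sub>y v\<close> is \<open>(n - 1) P\<^sub>n\<^sub>-\<^sub>1 - P\<^sub>n\<^sub>-\<^sub>1' + P\<^sub>n'\<close>, and the defining
  equation says \<open>W = v + \<partial>\<^sub>y v - 1 - X (y + L)\<close>. Differentiating both expressions for W in X and
  in y, and eliminating L with the log-derivative identities \<open>v \<partial>\<^sub>y L = \<partial>\<^sub>y v\<close> and
  \<open>v \<partial>\<^sub>X L = \<partial>\<^sub>X v\<close>, gives a linear equation for W whose right-hand side vanishes to higher
  order than W; hence W = 0. This is the identity for P; the second expression for W then gives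
  \<open>Q\<^sub>m = P\<^sub>m + P\<^sub>m'\<close>, and the identity for Q is the y-derivative of the one for P added to itself.\<close>

unbundle fps_syntax

definition fps_pderiv :: "'a::idom poly fps \<Rightarrow> 'a poly fps" where
  "fps_pderiv f = Abs_fps (\<lambda>n. pderiv (f $ n))"

lemma fps_pderiv_nth [simp]: "fps_pderiv f $ n = pderiv (f $ n)"
  by (simp add: fps_pderiv_def)

lemma fps_pderiv_add [simp]: "fps_pderiv (f + g) = fps_pderiv f + fps_pderiv g"
  by (rule fps_ext) (simp add: pderiv_add)

lemma fps_pderiv_diff [simp]: "fps_pderiv (f - g) = fps_pderiv f - fps_pderiv g"
  by (rule fps_ext) (simp add: pderiv_diff)

lemma fps_pderiv_const [simp]: "fps_pderiv (fps_const p) = fps_const (pderiv p)"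
  by (rule fps_ext) simp

lemma fps_pderiv_1 [simp]: "fps_pderiv 1 = 0"
  by (rule fps_ext) simp

lemma fps_pderiv_X [simp]: "fps_pderiv fps_X = 0"
  by (rule fps_ext) (simp add: fps_X_def)

lemma fps_pderiv_mult [simp]: "fps_pderiv (f * g) = fps_pderiv f * g + f * fps_pderiv g"
proof (rule fps_ext)
  fix n
  have "fps_pderiv (f * g) $ n = (\<Sum>i=0..n. pderiv (f $ i) * g $ (n - i) + f $ i * pderiv (g $ (n - i)))"
    by (simp add: fps_mult_nth higher_pderiv_sum[of 1, simplified] pderiv_mult mult.commute add.commute)
  then show "fps_pderiv (f * g) $ n = (fps_pderiv f * g + f * fps_pderiv g) $ n"
    by (simp add: fps_mult_nth sum.distrib)
qed

lemma fps_pderiv_fps_deriv: "fps_pderiv (fps_deriv f) = fps_deriv (fps_pderiv f)"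
  by (rule fps_ext) (simp add: of_nat_poly pderiv_smult)

definition fps_log1p_trunc :: "'a::field_char_0 poly fps \<Rightarrow> nat \<Rightarrow> 'a poly fps" where
  "fps_log1p_trunc u N = (\<Sum>k=1..N. fps_const [:(-1) ^ (k + 1) / of_nat k:] * u ^ k)"

lemma derivation_power:
  fixes D :: "'a::comm_ring_1 \<Rightarrow> 'a"
  assumes mult: "\<And>f g. D (f * g) = D f * g + f * D g"
  shows "D (u ^ Suc k) = of_nat (Suc k) * u ^ k * D u"
proof (induction k)
  case (Suc k)
  have "D (u ^ Suc (Suc k)) = D u * u ^ Suc k + u * (of_nat (Suc k) * u ^ k * D u)"
    using Suc by (simp add: mult)
  then show ?case by (simp add: algebra_simps)
qed (simp add: mult)

lemma fps_const_sign_power: "fps_const [:(-1) ^ m:] = ((-1) ^ m :: 'a::comm_ring_1 poly fps)"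
proof (induction m)
  case (Suc m)
  have "fps_const [:(-1) ^ Suc m:] = - (fps_const [:(-1) ^ m:] :: 'a poly fps)"
    by simp
  with Suc show ?case by simp
qed simp

lemma fps_log1p_trunc_derivation:
  fixes D :: "'a::field_char_0 poly fps \<Rightarrow> 'a poly fps" and u :: "'a poly fps"
  assumes add: "\<And>f g. D (f + g) = D f + D g"
    and mult: "\<And>f g. D (f * g) = D f * g + f * D g"
    and const: "\<And>c. D (fps_const [:c:]) = 0"
  shows "(1 + u) * D (fps_log1p_trunc u N) = (1 - (- u) ^ N) * D u"
proof -
  have D0: "D 0 = 0" using add[of 0 0] by simp
  have D_sum: "D (sum f A) = (\<Sum>x\<in>A. D (f x))" for f :: "nat \<Rightarrow> _" and A
    by (induction A rule: infinite_finite_induct) (auto simp: D0 add)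
  have D_term: "D (fps_const [:(-1) ^ (Suc k + 1) / of_nat (Suc k):] * u ^ Suc k) = (- u) ^ k * D u"
    for k
  proof -
    have "D (fps_const [:(-1) ^ (Suc k + 1) / of_nat (Suc k):] * u ^ Suc k)
        = fps_const [:(-1) ^ (Suc k + 1) / of_nat (Suc k):] * of_nat (Suc k) * u ^ k * D u"
      unfolding mult const derivation_power[OF mult] by (simp only: mult.assoc mult_zero_left add_0)
    also have "fps_const [:(-1) ^ (Suc k + 1) / of_nat (Suc k):] * of_nat (Suc k)
        = (fps_const [:(-1) ^ k:] :: 'a poly fps)"
      by (simp add: fps_of_nat[symmetric] of_nat_poly del: of_nat_Suc)
    also have "\<dots> * u ^ k = (- u) ^ k"
      unfolding fps_const_sign_power power_minus[of u k] ..
    finally show ?thesis .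
  qed
  have "D (fps_log1p_trunc u N) = (\<Sum>k<N. (- u) ^ k) * D u"
    unfolding fps_log1p_trunc_def D_sum sum_bounds_lt_plus1[symmetric] sum_distrib_right D_term ..
  then have "(1 + u) * D (fps_log1p_trunc u N) = - ((- u - 1) * (\<Sum>k<N. (- u) ^ k)) * D u"
    by (simp only: mult.assoc[symmetric] minus_mult_left minus_diff_eq diff_minus_eq_add add.commute)
  also have "\<dots> = (1 - (- u) ^ N) * D u"
    by (simp only: power_diff_1_eq[symmetric] minus_diff_eq)
  finally show ?thesis .
qed

lemma fps_mult_nth_cong:
  assumes "\<And>i. i \<le> n \<Longrightarrow> g $ i = h $ i"
  shows "(f * g) $ n = (f * h) $ n"
  using assms by (simp add: fps_mult_nth)

lemma fps_log_derivation:
  fixes D :: "'a::field_char_0 poly fps \<Rightarrow> 'a poly fps" and u L :: "'a poly fps"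
  assumes add: "\<And>f g. D (f + g) = D f + D g"
    and mult: "\<And>f g. D (f * g) = D f * g + f * D g"
    and const: "\<And>c. D (fps_const [:c:]) = 0"
    and local: "\<And>f g n. (\<And>j. j \<le> n + 1 \<Longrightarrow> f $ j = g $ j) \<Longrightarrow> D f $ n = D g $ n"
    and u0: "u $ 0 = 0"
    and L: "\<And>n N. n \<le> N \<Longrightarrow> L $ n = fps_log1p_trunc u N $ n"
  shows "(1 + u) * D L = D u"
proof (rule fps_ext)
  fix n
  have "((1 + u) * D L) $ n = ((1 + u) * D (fps_log1p_trunc u (n + 2))) $ n"
    by (intro fps_mult_nth_cong local L) simp
  also have "\<dots> = ((1 - (- u) ^ (n + 2)) * D u) $ n"
    by (simp only: fps_log1p_trunc_derivation[OF add mult const])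
  also have "\<dots> = D u $ n - ((- u) ^ (n + 2) * D u) $ n"
    by (simp add: algebra_simps)
  also have "((- u) ^ (n + 2) * D u) $ n = 0"
    using startsby_zero_power_prefix[of "- u" "n + 2"] u0 by (simp add: fps_mult_nth)
  finally show "((1 + u) * D L) $ n = D u $ n" by simp
qed

definition fps_zero_below :: "nat \<Rightarrow> 'a::zero fps \<Rightarrow> bool" where
  "fps_zero_below n f \<longleftrightarrow> (\<forall>k<n. f $ k = 0)"

lemma fps_zero_below_mult:
  fixes f g :: "'a::comm_ring_1 fps"
  shows "fps_zero_below n f \<Longrightarrow> fps_zero_below n (g * f)"
  by (auto simp: fps_zero_below_def fps_mult_nth intro!: sum.neutral)

lemma fps_zero_below_mult_Suc:
  fixes f g :: "'a::comm_ring_1 fps"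
  assumes "g $ 0 = 0" and "fps_zero_below n f"
  shows "fps_zero_below (Suc n) (g * f)"
  unfolding fps_zero_below_def fps_mult_nth
proof (intro allI impI sum.neutral ballI)
  fix k i assume "k < Suc n" and "i \<in> {0..k}"
  then show "g $ i * f $ (k - i) = 0"
    using assms by (cases i) (auto simp: fps_zero_below_def)
qed

lemma fps_zero_below_X_mult:
  fixes f :: "'a::comm_ring_1 fps"
  shows "fps_zero_below n f \<Longrightarrow> fps_zero_below (Suc n) (fps_X * f)"
  by (auto simp: fps_zero_below_def fps_X_mult_nth)

lemma fps_zero_below_X_mult_deriv:
  fixes f :: "'a::comm_ring_1 fps"
  shows "fps_zero_below n f \<Longrightarrow> fps_zero_below n (fps_X * fps_deriv f)"
  by (auto simp: fps_zero_below_def)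

lemma fps_zero_below_pderiv: "fps_zero_below n f \<Longrightarrow> fps_zero_below n (fps_pderiv f)"
  by (auto simp: fps_zero_below_def)

lemma fps_zero_below_diff:
  fixes f g :: "'a::comm_ring_1 fps"
  shows "fps_zero_below n f \<Longrightarrow> fps_zero_below n g \<Longrightarrow> fps_zero_below n (f - g)"
  by (auto simp: fps_zero_below_def)

lemma fps_eq_0_if_contraction:
  fixes v W :: "'a::idom poly fps"
  assumes v0: "v $ 0 = 1"
    and W: "W = fps_X * (v * (fps_X * fps_deriv W)) - fps_X * ((v - 1) * W)
              - fps_X * (v * fps_pderiv W) - (v - 1) * W"
  shows "W = 0"
proof -
  have "fps_zero_below n W" for n
  proof (induction n)
    case 0
    then show ?case by (simp add: fps_zero_below_def)
  next
    case (Suc n)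
    have "(v - 1) $ 0 = 0" using v0 by simp
    with Suc have "fps_zero_below (Suc n) (fps_X * (v * (fps_X * fps_deriv W))
        - fps_X * ((v - 1) * W) - fps_X * (v * fps_pderiv W) - (v - 1) * W)"
      by (intro fps_zero_below_diff fps_zero_below_X_mult fps_zero_below_mult
            fps_zero_below_X_mult_deriv fps_zero_below_pderiv fps_zero_below_mult_Suc)
    with W show ?case by simp
  qed
  then show ?thesis
    by (intro fps_ext) (auto simp: fps_zero_below_def)
qed

text \<open>Here W, DW, TW stand for W, \<open>\<partial>\<^sub>y W\<close>, \<open>\<partial>\<^sub>X W\<close>; a, b, c, d for \<open>\<partial>\<^sub>y v\<close>, \<open>\<partial>\<^sub>X v\<close>, \<open>\<partial>\<^sub>y\<^sup>2 v\<close>, \<open>\<partial>\<^sub>X \<partial>\<^sub>y v\<close>;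
  lY, lT for \<open>\<partial>\<^sub>y L\<close>, \<open>\<partial>\<^sub>X L\<close>.\<close>

lemma residual_contraction_identity:
  fixes X v a b c d W DW TW Y L lY lT :: "'a::idom"
  assumes W1: "W = X * X * b - X * v - X * a + a" and W2: "W = v + a - 1 - X * (Y + L)"
    and D1: "DW = X * X * d - X * a - X * c + c" and D2: "DW = a + c - X * (1 + lY)"
    and T: "TW = b + d - (Y + L) - X * lT" and LY: "v * lY = a" and LT: "v * lT = b"
  shows "W = X * (v * (X * TW)) - X * ((v - 1) * W) - X * (v * DW) - (v - 1) * W"
proof -
  have "X * X * v * TW = (v + X * v - X) * W + X * v * DW"
    using assms by algebra
  then show ?thesis by algebra
qed

lemma residual_eq_0:
  fixes v L :: "'a::idom poly fps"
  defines "X \<equiv> fps_X" and "Y \<equiv> fps_const [:0, 1:]"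
  assumes v0: "v $ 0 = 1"
    and log_pderiv: "v * fps_pderiv L = fps_pderiv v"
    and log_deriv: "v * fps_deriv L = fps_deriv v"
    and eqn: "v = 1 + X * Y - X * v + X * (X * fps_deriv v) - X * fps_pderiv v + X * L"
  shows "X * (X * fps_deriv v) - X * v - X * fps_pderiv v + fps_pderiv v = 0"
proof -
  define W where "W = X * (X * fps_deriv v) - X * v - X * fps_pderiv v + fps_pderiv v"
  have W2: "W = v + fps_pderiv v - 1 - X * (Y + L)"
    using eqn unfolding W_def by algebra
  have D1: "fps_pderiv W = X * X * fps_deriv (fps_pderiv v) - X * fps_pderiv v
      - X * fps_pderiv (fps_pderiv v) + fps_pderiv (fps_pderiv v)"
    unfolding W_def by (simp add: X_def fps_pderiv_fps_deriv mult.assoc)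
  have D2: "fps_pderiv W = fps_pderiv v + fps_pderiv (fps_pderiv v) - X * (1 + fps_pderiv L)"
    unfolding W2 by (simp add: X_def Y_def pderiv.simps)
  have T: "fps_deriv W = fps_deriv v + fps_deriv (fps_pderiv v) - (Y + L) - X * fps_deriv L"
    unfolding W2 by (simp add: X_def Y_def algebra_simps)
  have "W = X * (v * (X * fps_deriv W)) - X * ((v - 1) * W) - X * (v * fps_pderiv W) - (v - 1) * W"
    by (rule residual_contraction_identity[OF W_def[unfolded mult.assoc[symmetric]] W2 D1 D2 T
          log_pderiv log_deriv])
  then have "W = 0"
    using fps_eq_0_if_contraction[OF v0] by (simp add: X_def)
  then show ?thesis
    by (simp add: W_def)
qed

lemma ser_pow_eq_fps_power: "ser_pow s k = fps_nth (Abs_fps s ^ k)"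
  by (induction k) (auto simp: ser_one_def ser_mult_def fps_mult_nth atLeast0AtMost fps_one_nth)

lemma ser_log_eq_fps_log1p_trunc:
  assumes V0: "V 0 = 1" and "n \<le> N"
  shows "ser_log V n = fps_log1p_trunc (Abs_fps V - 1) N $ n"
proof -
  let ?u = "Abs_fps V - 1"
  have u: "Abs_fps (ser_sub V ser_one) = ?u"
    by (rule fps_ext) (simp add: ser_sub_def ser_one_def)
  have u0: "?u $ 0 = 0" using V0 by simp
  have "ser_log V n = (\<Sum>k=1..n. smult ((-1) ^ (k + 1) / of_nat k) ((?u ^ k) $ n))"
    unfolding ser_log_def ser_log1p_def ser_pow_eq_fps_power u ..
  also have "\<dots> = (\<Sum>k=1..N. smult ((-1) ^ (k + 1) / of_nat k) ((?u ^ k) $ n))"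
    using startsby_zero_power_prefix[OF u0] \<open>n \<le> N\<close> by (intro sum.mono_neutral_left) auto
  also have "\<dots> = fps_log1p_trunc ?u N $ n"
    by (simp add: fps_log1p_trunc_def fps_sum_nth)
  finally show ?thesis .
qed

lemma V_eqn_fps:
  assumes "V_eqn V"
  defines "v \<equiv> Abs_fps V" and "X \<equiv> fps_X"
  shows "V 0 = 1"
    and "v = 1 + X * fps_const [:0, 1:] - X * v + X * (X * fps_deriv v) - X * fps_pderiv v
           + X * Abs_fps (ser_log V)"
proof -
  have eqn: "V n = ser_one n + ser_y_over_x n - ser_xinv V n - ser_dx V n
      - ser_xinv (ser_dy V) n + ser_xinv (ser_log V) n" for n
    using fun_cong[OF assms(1)[unfolded V_eqn_def], of n] by (simp add: ser_add_def ser_sub_def)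
  show V0: "V 0 = 1"
    using eqn[of 0] by (simp add: ser_one_def ser_y_over_x_def ser_xinv_def ser_dx_def)
  show "v = 1 + X * fps_const [:0, 1:] - X * v + X * (X * fps_deriv v) - X * fps_pderiv v
      + X * Abs_fps (ser_log V)"
  proof (rule fps_ext)
    fix n
    show "v $ n = (1 + X * fps_const [:0, 1:] - X * v + X * (X * fps_deriv v) - X * fps_pderiv v
        + X * Abs_fps (ser_log V)) $ n"
      using V0 eqn[of n]
      by (cases n; cases "n - 1")
         (auto simp: v_def X_def ser_one_def ser_y_over_x_def ser_xinv_def ser_dx_def ser_dy_def
           of_nat_poly)
  qed
qed

lemma V_eqn_residual_eq_0:
  assumes "V_eqn V"
  defines "v \<equiv> Abs_fps V" and "X \<equiv> fps_X"
  shows "X * (X * fps_deriv v) - X * v - X * fps_pderiv v + fps_pderiv v = 0"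
proof -
  let ?L = "Abs_fps (ser_log V)" and ?u = "v - 1"
  note V0 = V_eqn_fps(1)[OF assms(1)]
  have u0: "?u $ 0 = 0" using V0 by (simp add: v_def)
  have trunc: "?L $ n = fps_log1p_trunc ?u N $ n" if "n \<le> N" for n N
    using ser_log_eq_fps_log1p_trunc[of V, OF V0 that] by (simp add: v_def)
  have "(1 + ?u) * fps_pderiv ?L = fps_pderiv ?u"
    by (rule fps_log_derivation[OF _ _ _ _ u0 trunc]) (auto simp: pderiv.simps)
  moreover have "(1 + ?u) * fps_deriv ?L = fps_deriv ?u"
    by (rule fps_log_derivation[OF _ _ _ _ u0 trunc]) (auto simp: algebra_simps)
  ultimately show ?thesis
    using residual_eq_0[of v ?L] V_eqn_fps[OF assms(1)] V0 by (simp add: v_def X_def)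
qed

lemma V_eqn_coeff_recurrence:
  assumes "V_eqn V" and "n \<ge> 1"
  shows "smult (of_nat (n - 1)) (V n) = pderiv (V n) - pderiv (V (Suc n))"
proof -
  obtain k where k: "n = Suc k" using \<open>n \<ge> 1\<close> by (cases n) auto
  have "(fps_X * (fps_X * fps_deriv (Abs_fps V)) - fps_X * Abs_fps V - fps_X * fps_pderiv (Abs_fps V)
      + fps_pderiv (Abs_fps V)) $ Suc n = 0"
    using V_eqn_residual_eq_0[OF assms(1)] by simp
  then have "smult (of_nat n) (V n) - V n - pderiv (V n) + pderiv (V (Suc n)) = 0"
    using k by (simp add: of_nat_poly del: of_nat_Suc)
  then show ?thesis
    using k by (simp add: smult_add_left algebra_simps)
qed

lemma V_eqn_ser_log_coeff:
  assumes "V_eqn V" and "m \<ge> 1"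
  shows "ser_log V m = V (Suc m) + pderiv (V (Suc m))"
proof -
  let ?v = "Abs_fps V" and ?X = "fps_X :: complex poly fps"
  have "?v + fps_pderiv ?v - 1 - ?X * (fps_const [:0, 1:] + Abs_fps (ser_log V))
      = ?X * (?X * fps_deriv ?v) - ?X * ?v - ?X * fps_pderiv ?v + fps_pderiv ?v"
    using V_eqn_fps(2)[OF assms(1)] by algebra
  then have "(?v + fps_pderiv ?v - 1 - ?X * (fps_const [:0, 1:] + Abs_fps (ser_log V))) $ Suc m = 0"
    using V_eqn_residual_eq_0[OF assms(1)] by simp
  then show ?thesis
    using \<open>m \<ge> 1\<close> by (simp add: algebra_simps)
qed

theorem theorem4p6:
  fixes V :: ser and P Q :: "nat \<Rightarrow> complex poly"
  assumes "V \<in> serA" and "V_eqn V"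
    and "\<And>n. n \<ge> 1 \<Longrightarrow> P (n - 1) = V n"
    and "\<And>n. n \<ge> 1 \<Longrightarrow> Q n = ser_log V n"
  shows "(\<forall>n\<ge>1. smult (of_nat (n - 1)) (P (n - 1)) = pderiv (P (n - 1)) - pderiv (P n))
       \<and> (\<forall>n\<ge>2. smult (of_nat (n - 1)) (Q (n - 1)) = pderiv (Q (n - 1)) - pderiv (Q n))"
proof (intro conjI allI impI)
  have P: "P n = V (Suc n)" for n
    using assms(3)[of "Suc n"] by simp
  have V_rec: "smult (of_nat n) (V (Suc n)) = pderiv (V (Suc n)) - pderiv (V (Suc (Suc n)))" for n
    using V_eqn_coeff_recurrence[OF assms(2), of "Suc n"] by simp
  fix n :: nat
  show "smult (of_nat (n - 1)) (P (n - 1)) = pderiv (P (n - 1)) - pderiv (P n)" if "n \<ge> 1"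
    using V_rec[of "n - 1"] that by (simp add: P)
  show "smult (of_nat (n - 1)) (Q (n - 1)) = pderiv (Q (n - 1)) - pderiv (Q n)" if "n \<ge> 2"
  proof -
    have Q: "Q k = V (Suc k) + pderiv (V (Suc k))" if "k \<ge> 1" for k
      using assms(4) V_eqn_ser_log_coeff[OF assms(2)] that by simp
    have "smult (of_nat (n - 1)) (pderiv (V n))
        = pderiv (pderiv (V n)) - pderiv (pderiv (V (Suc n)))"
      using arg_cong[OF V_rec[of "n - 1"], of pderiv] \<open>n \<ge> 2\<close> by (simp add: pderiv_smult pderiv_diff)
    then show ?thesis
      using V_rec[of "n - 1"] \<open>n \<ge> 2\<close> by (simp add: Q smult_add_right pderiv_add)
  qed
qed

end
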